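(* Let $K>0$, $\alpha>0$ and $0<x<1$. Let $f_{1}(x,K)$ be the probability that a centered Gaussian vector $(v_1,v_2)$ with $\mathbb{E}[v_1^2]=\mathbb{E}[v_2^2]=1$ and $\mathbb{E}[v_1v_2]=1-2x$ takes values in the box $[-K,K]^2$, and define $$\alpha_{UB}(x,K)\equiv-\frac{\ln 2+H_{2}(x)}{\ln f_{1}(x,K)}.$$ If $\alpha>\alpha_{UB}(x,K)$, then with high probability there are no SAT-$x$-pairs, i.e. $\lim_{N\to\infty}\mathbb{P}\left[\mathcal{Z}_{2}(x,K,\boldsymbol{\xi})>0\right]=0$.
   Context: Rectangular binary perceptron: for $N\ge1$ and $M$ with $M/N=\alpha$ (e.g. $M=\lfloor\alpha N\rfloor$), let $\xi_i^\mu$, $i=1,\dots,N$, $\mu=1,\dots,M$, be i.i.d. Gaussian with mean $0$ and variance $1/N$. A vector $\mathbf{w}\in\{-1,1\}^N$ is a solution if $\sum_{i=1}^N w_i\xi_i^\mu\in[-K,K]$ for all $\mu=1,\dots,M$. The Hamming distance is $d_H(\mathbf{w}^1,\mathbf{w}^2)=\sum_i(1-w_i^1w_i^2)/2$. A SAT-$x$-pair is an ordered pair $(\mathbf{w}^1,\mathbf{w}^2)$ of solutions with $d_H(\mathbf{w}^1,\mathbf{w}^2)=\lfloor Nx\rfloor$, and $\mathcal{Z}_{2}(x,K,\boldsymbol{\xi})$ denotes the number of such pairs. $H_2(x)=-x\ln x-(1-x)\ln(1-x)$. *)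

theory Defs
  imports "HOL-Probability.Probability"
begin

definition H2 :: "real \<Rightarrow> real" where
  "H2 x = - x * ln x - (1 - x) * ln (1 - x)"

definition bivariate_normal_density :: "real \<Rightarrow> real \<times> real \<Rightarrow> real" where
  "bivariate_normal_density rho = (\<lambda>(v1, v2).
     1 / (2 * pi * sqrt (1 - rho\<^sup>2)) *
     exp (- (v1\<^sup>2 - 2 * rho * v1 * v2 + v2\<^sup>2) / (2 * (1 - rho\<^sup>2))))"

definition f1 :: "real \<Rightarrow> real \<Rightarrow> real" where
  "f1 x K = measure (density lborel (bivariate_normal_density (1 - 2 * x)))
                    ({-K..K} \<times> {-K..K})"

definition alpha_UB :: "real \<Rightarrow> real \<Rightarrow> real" where
  "alpha_UB x K = - (ln 2 + H2 x) / ln (f1 x K)"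

definition numM :: "real \<Rightarrow> nat \<Rightarrow> nat" where
  "numM \<alpha> N = nat \<lfloor>\<alpha> * real N\<rfloor>"

text \<open>Disorder: xi(i,mu), i < N, mu < M, i.i.d. N(0, 1/N).\<close>
definition disorder :: "nat \<Rightarrow> nat \<Rightarrow> (nat \<times> nat \<Rightarrow> real) measure" where
  "disorder N M = PiM ({..<N} \<times> {..<M}) (\<lambda>_. density lborel (normal_density 0 (sqrt (1 / real N))))"

definition cube :: "nat \<Rightarrow> (nat \<Rightarrow> real) set" where
  "cube N = {..<N} \<rightarrow>\<^sub>E {-1, 1}"

definition is_solution :: "nat \<Rightarrow> nat \<Rightarrow> real \<Rightarrow> (nat \<times> nat \<Rightarrow> real) \<Rightarrow> (nat \<Rightarrow> real) \<Rightarrow> bool" where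
  "is_solution N M K \<xi> w \<longleftrightarrow> w \<in> cube N \<and>
     (\<forall>\<mu> < M. (\<Sum>i<N. w i * \<xi> (i, \<mu>)) \<in> {-K..K})"

definition hamming :: "nat \<Rightarrow> (nat \<Rightarrow> real) \<Rightarrow> (nat \<Rightarrow> real) \<Rightarrow> nat" where
  "hamming N w1 w2 = card {i \<in> {..<N}. w1 i \<noteq> w2 i}"

definition Z2 :: "nat \<Rightarrow> nat \<Rightarrow> real \<Rightarrow> real \<Rightarrow> (nat \<times> nat \<Rightarrow> real) \<Rightarrow> nat" where
  "Z2 N M x K \<xi> = card {(w1, w2). is_solution N M K \<xi> w1 \<and> is_solution N M K \<xi> w2 \<and>
       hamming N w1 w2 = nat \<lfloor>real N * x\<rfloor>}"

end

theory Submission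
  imports Defs
begin

(*
  First moment method. Fix w1, w2 in {-1, 1}^N at Hamming distance d and let A and B be the sets
  of coordinates where they agree and differ. In every constraint, w1 . xi = U + V and w2 . xi = U - V
  with U, V independent centred normals of variances |A|/N and |B|/N, so both constraints hold iff
  |U| + |V| <= K, i.e. iff a standard Gaussian pair (s, r) lies in the rhombus
  sqrt (1 - d/N) |s| + sqrt (d/N) |r| <= K. The M constraints are independent, so the pair survives
  with probability q^M, where q is this rhombus probability; at d/N = x it is exactly f1 (x, K).
  There are at most 2^N (N choose d) <= exp (N (ln 2 + H2 (d/N))) ordered pairs, hence
  P (Z2 > 0) <= exp (N (ln 2 + H2 (d/N) + (M/N) ln q)), and the exponent tends to a negative limit.
*)

section \<open>Centred Gaussian pairs\<close>

abbreviation gauss :: "real \<Rightarrow> real measure" where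
  "gauss \<sigma> \<equiv> density lborel (normal_density 0 \<sigma>)"

abbreviation gauss_pair :: "real \<Rightarrow> real \<Rightarrow> (real \<times> real) measure" where
  "gauss_pair \<sigma>1 \<sigma>2 \<equiv> gauss \<sigma>1 \<Otimes>\<^sub>M gauss \<sigma>2"

lemma prob_space_gauss_pair:
  assumes "0 < \<sigma>1" "0 < \<sigma>2"
  shows "prob_space (gauss_pair \<sigma>1 \<sigma>2)"
proof -
  interpret G1: prob_space "gauss \<sigma>1" by (rule prob_space_normal_density) fact
  interpret G2: prob_space "gauss \<sigma>2" by (rule prob_space_normal_density) fact
  interpret pair_prob_space "gauss \<sigma>1" "gauss \<sigma>2" ..
  show ?thesis by (rule P.prob_space_axioms)
qed

lemma sets_gauss_pair: "sets (gauss_pair \<sigma>1 \<sigma>2) = sets borel"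
proof -
  have "sets (gauss_pair \<sigma>1 \<sigma>2) = sets (borel \<Otimes>\<^sub>M borel :: (real \<times> real) measure)"
    by (intro sets_pair_measure_cong) auto
  then show ?thesis by (metis borel_prod)
qed

lemma gauss_eq_distr_std:
  assumes "0 < \<sigma>"
  shows "gauss \<sigma> = distr (gauss 1) lborel (\<lambda>s. \<sigma> * s)"
proof -
  interpret G: prob_space "gauss 1" by (rule prob_space_normal_density) simp
  have "distributed (gauss 1) lborel (\<lambda>s. s) (normal_density 0 1)"
    unfolding distributed_def by (simp add: distr_id2)
  from G.normal_density_affine[OF this, where \<alpha>=\<sigma> and \<beta>=0] assms
  show ?thesis by (simp add: distributed_def)
qed

lemma gauss_pair_eq_distr_std:
  assumes "0 < \<sigma>1" "0 < \<sigma>2"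
  shows "gauss_pair \<sigma>1 \<sigma>2 = distr (gauss_pair 1 1) lborel (\<lambda>(s, r). (\<sigma>1 * s, \<sigma>2 * r))"
proof -
  interpret G2: prob_space "gauss \<sigma>2" by (rule prob_space_normal_density) fact
  have "gauss_pair \<sigma>1 \<sigma>2
      = distr (gauss_pair 1 1) (lborel \<Otimes>\<^sub>M lborel) (\<lambda>(s, r). (\<sigma>1 * s, \<sigma>2 * r))"
    unfolding gauss_eq_distr_std[OF assms(1)] gauss_eq_distr_std[OF assms(2)]
    by (rule pair_measure_distr)
      (auto simp: gauss_eq_distr_std[OF assms(2), symmetric] G2.sigma_finite_measure_axioms)
  then show ?thesis by (simp add: lborel_prod)
qed

lemma gauss_pair_eq_density:
  assumes "0 < \<sigma>2"
  shows "gauss_pair \<sigma>1 \<sigma>2 = density lborel (\<lambda>(x, y). normal_density 0 \<sigma>1 x * normal_density 0 \<sigma>2 y)"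
proof -
  interpret G2: prob_space "gauss \<sigma>2" by (rule prob_space_normal_density) fact
  have "gauss_pair \<sigma>1 \<sigma>2 = density (lborel \<Otimes>\<^sub>M lborel)
      (\<lambda>(x, y). ennreal (normal_density 0 \<sigma>1 x) * ennreal (normal_density 0 \<sigma>2 y))"
    by (intro pair_measure_density lborel.sigma_finite_measure_axioms G2.sigma_finite_measure_axioms) simp_all
  then show ?thesis
    by (simp add: lborel_prod split_beta' ennreal_mult normal_density_nonneg)
qed

lemma emeasure_gauss_pos:
  assumes "0 < \<sigma>" and A: "A \<in> sets borel" and "0 < emeasure lborel A"
  shows "0 < emeasure (gauss \<sigma>) A"
proof (rule ccontr)
  assume "\<not> 0 < emeasure (gauss \<sigma>) A"
  then have "A \<in> null_sets (gauss \<sigma>)"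
    using A by (simp add: null_sets_def)
  then have "AE x in lborel. x \<in> A \<longrightarrow> normal_density 0 \<sigma> x = 0"
    by (simp add: null_sets_density_iff)
  then have "AE x in lborel. x \<notin> A"
    by (rule eventually_mono) (metis normal_density_pos[OF \<open>0 < \<sigma>\<close>] less_irrefl)
  then have "A \<in> null_sets lborel"
    using A by (simp add: AE_iff_null_sets)
  with \<open>0 < emeasure lborel A\<close> show False by (simp add: null_sets_def)
qed

lemma measure_std_gauss_pair_Times_pos:
  assumes "A \<in> sets borel" "B \<in> sets borel" "0 < emeasure lborel A" "0 < emeasure lborel B"
  shows "0 < measure (gauss_pair 1 1) (A \<times> B)"
proof -
  interpret G: prob_space "gauss 1" by (rule prob_space_normal_density) simp
  interpret P: prob_space "gauss_pair 1 1" by (rule prob_space_gauss_pair) simp_all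
  have "emeasure (gauss_pair 1 1) (A \<times> B) = emeasure (gauss 1) A * emeasure (gauss 1) B"
    using assms by (intro G.emeasure_pair_measure_Times) auto
  also have "\<dots> > 0"
    using assms emeasure_gauss_pos[of 1] by (simp add: ennreal_zero_less_mult_iff)
  finally show ?thesis by (simp add: P.emeasure_eq_measure)
qed

lemma measure_std_gauss_pair_mono:
  assumes "A \<subseteq> B" "B \<in> sets borel"
  shows "measure (gauss_pair 1 1) A \<le> measure (gauss_pair 1 1) B"
proof -
  interpret prob_space "gauss_pair 1 1" by (rule prob_space_gauss_pair) simp_all
  show ?thesis using assms by (metis finite_measure_mono sets_gauss_pair)
qed

section \<open>The rhombus probability\<close>

definition rhombus :: "real \<Rightarrow> real \<Rightarrow> real \<Rightarrow> (real \<times> real) set" where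
  "rhombus a b K = {z. a * \<bar>fst z\<bar> + b * \<bar>snd z\<bar> \<le> K}"

definition rhombus_prob :: "real \<Rightarrow> real \<Rightarrow> real \<Rightarrow> real" where
  "rhombus_prob a b K = measure (gauss_pair 1 1) (rhombus a b K)"

lemma rhombus_borel [measurable]: "rhombus a b K \<in> sets borel"
  unfolding rhombus_def by (intro borel_closed closed_Collect_le continuous_intros)

lemma rhombus_antimono:
  assumes "a \<le> a'" "b \<le> b'" "K' \<le> K"
  shows "rhombus a' b' K' \<subseteq> rhombus a b K"
proof
  fix z assume "z \<in> rhombus a' b' K'"
  moreover have "a * \<bar>fst z\<bar> + b * \<bar>snd z\<bar> \<le> a' * \<bar>fst z\<bar> + b' * \<bar>snd z\<bar>"
    using assms by (intro add_mono mult_right_mono) auto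
  ultimately show "z \<in> rhombus a b K"
    using assms by (simp add: rhombus_def)
qed

lemma rhombus_scale: "0 < c \<Longrightarrow> rhombus (c * a) (c * b) K = rhombus a b (K / c)"
  unfolding rhombus_def by (auto simp: field_simps)

lemma rhombus_prob_antimono:
  "a \<le> a' \<Longrightarrow> b \<le> b' \<Longrightarrow> K' \<le> K \<Longrightarrow> rhombus_prob a' b' K' \<le> rhombus_prob a b K"
  unfolding rhombus_prob_def by (intro measure_std_gauss_pair_mono rhombus_antimono) auto

lemma rhombus_prob_pos:
  assumes "0 < a" "0 < b" "0 < K"
  shows "0 < rhombus_prob a b K"
proof -
  have "{-K/(2*a)..K/(2*a)} \<times> {-K/(2*b)..K/(2*b)} \<subseteq> rhombus a b K"
  proof
    fix z assume "z \<in> {-K/(2*a)..K/(2*a)} \<times> {-K/(2*b)..K/(2*b)}"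
    then have "\<bar>fst z\<bar> \<le> K / (2 * a)" "\<bar>snd z\<bar> \<le> K / (2 * b)"
      by (auto simp: abs_le_iff mem_Times_iff)
    then have "a * \<bar>fst z\<bar> \<le> K / 2" "b * \<bar>snd z\<bar> \<le> K / 2"
      using assms by (simp_all add: pos_le_divide_eq mult.commute mult.left_commute)
    then show "z \<in> rhombus a b K" by (simp add: rhombus_def)
  qed
  moreover have "0 < measure (gauss_pair 1 1) ({-K/(2*a)..K/(2*a)} \<times> {-K/(2*b)..K/(2*b)})"
    using assms by (intro measure_std_gauss_pair_Times_pos) (auto simp: field_simps)
  ultimately show ?thesis
    unfolding rhombus_prob_def using measure_std_gauss_pair_mono[of _ "rhombus a b K"]
    by (meson less_le_trans rhombus_borel)
qed

lemma rhombus_prob_less_one: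
  assumes "0 < a" "0 \<le> b"
  shows "rhombus_prob a b K < 1"
proof -
  interpret P: prob_space "gauss_pair 1 1" by (rule prob_space_gauss_pair) simp_all
  have "{K/a + 1..K/a + 2} \<times> UNIV \<subseteq> - rhombus a b K"
  proof
    fix z :: "real \<times> real" assume "z \<in> {K/a + 1..K/a + 2} \<times> UNIV"
    then have "K/a < \<bar>fst z\<bar>" by auto
    then have "K < a * \<bar>fst z\<bar>" using assms by (simp add: pos_divide_less_eq mult.commute)
    moreover have "0 \<le> b * \<bar>snd z\<bar>" using assms by simp
    ultimately show "z \<in> - rhombus a b K" by (simp add: rhombus_def)
  qed
  moreover have "0 < measure (gauss_pair 1 1) ({K/a + 1..K/a + 2} \<times> UNIV)"
    by (intro measure_std_gauss_pair_Times_pos) auto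
  ultimately have "0 < measure (gauss_pair 1 1) (- rhombus a b K)"
    using measure_std_gauss_pair_mono borel_comp[OF rhombus_borel] by (meson less_le_trans)
  moreover have "rhombus a b K \<in> P.events"
    using sets_gauss_pair rhombus_borel by blast
  ultimately show ?thesis
    using P.prob_compl[of "rhombus a b K"] by (simp add: rhombus_prob_def space_pair_measure Compl_eq_Diff_UNIV)
qed

lemma rhombus_prob_continuous_from_right:
  "((\<lambda>K'. rhombus_prob a b K') \<longlongrightarrow> rhombus_prob a b K) (at_right K)"
proof (rule tendsto_at_right_sequentially[of K "K + 1"])
  interpret P: prob_space "gauss_pair 1 1" by (rule prob_space_gauss_pair) simp_all
  fix S :: "nat \<Rightarrow> real"
  assume "\<And>n. K < S n" "\<And>n. S n < K + 1" "decseq S" "S \<longlonglongrightarrow> K"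
  have "(\<lambda>n. measure (gauss_pair 1 1) (rhombus a b (S n)))
      \<longlonglongrightarrow> measure (gauss_pair 1 1) (\<Inter>n. rhombus a b (S n))"
  proof (rule P.finite_Lim_measure_decseq)
    show "range (\<lambda>n. rhombus a b (S n)) \<subseteq> sets (gauss_pair 1 1)"
      using sets_gauss_pair rhombus_borel by blast
    show "decseq (\<lambda>n. rhombus a b (S n))"
      using \<open>decseq S\<close> by (metis decseq_def rhombus_antimono order_refl)
  qed
  also have "(\<Inter>n. rhombus a b (S n)) = rhombus a b K"
  proof
    show "(\<Inter>n. rhombus a b (S n)) \<subseteq> rhombus a b K"
    proof
      fix z assume "z \<in> (\<Inter>n. rhombus a b (S n))"
      then have "\<forall>n. a * \<bar>fst z\<bar> + b * \<bar>snd z\<bar> \<le> S n" by (simp add: rhombus_def)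
      with \<open>S \<longlonglongrightarrow> K\<close> show "z \<in> rhombus a b K" by (simp add: rhombus_def LIMSEQ_le_const)
    qed
    show "rhombus a b K \<subseteq> (\<Inter>n. rhombus a b (S n))"
      using \<open>\<And>n. K < S n\<close> by (intro INT_greatest rhombus_antimono) (auto intro: less_imp_le)
  qed
  finally show "(\<lambda>n. rhombus_prob a b (S n)) \<longlonglongrightarrow> rhombus_prob a b K"
    unfolding rhombus_prob_def .
qed simp

lemma eventually_rhombus_prob_le:
  assumes "(an \<longlongrightarrow> a) F" "(bn \<longlongrightarrow> b) F" "0 < a" "0 < b" "K < K'"
  shows "\<forall>\<^sub>F n in F. rhombus_prob (an n) (bn n) K \<le> rhombus_prob a b K'"
proof -
  define c where "c n = min (an n / a) (bn n / b)" for n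
  have "(c \<longlongrightarrow> min (a / a) (b / b)) F"
    unfolding c_def using assms by (intro tendsto_intros) auto
  then have c: "(c \<longlongrightarrow> 1) F" using assms by simp
  then have "\<forall>\<^sub>F n in F. 0 < c n" by (rule order_tendstoD) simp
  moreover have "\<forall>\<^sub>F n in F. K / c n < K'"
    using assms by (intro order_tendstoD(2)[OF tendsto_divide[OF tendsto_const c]]) auto
  ultimately show ?thesis
  proof eventually_elim
    case (elim n)
    have "c n * a \<le> an n" "c n * b \<le> bn n"
      using assms by (auto simp: c_def pos_le_divide_eq[symmetric] min_le_iff_disj)
    then have "rhombus_prob (an n) (bn n) K \<le> rhombus_prob (c n * a) (c n * b) K"
      by (rule rhombus_prob_antimono) simp
    also have "\<dots> = rhombus_prob a b (K / c n)"
      using elim by (simp add: rhombus_prob_def rhombus_scale)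
    also have "\<dots> \<le> rhombus_prob a b K'"
      using elim by (intro rhombus_prob_antimono) auto
    finally show ?case .
  qed
qed

lemma add_diff_mem_Icc_iff:
  fixes p q K :: real
  shows "p + q \<in> {-K..K} \<and> p - q \<in> {-K..K} \<longleftrightarrow> \<bar>p\<bar> + \<bar>q\<bar> \<le> K"
  by (cases "0 \<le> p"; cases "0 \<le> q") auto

definition sum_diff_box :: "real \<Rightarrow> (real \<times> real) set" where
  "sum_diff_box K = {(u, v). u + v \<in> {-K..K} \<and> u - v \<in> {-K..K}}"

lemma sum_diff_box_borel [measurable]: "sum_diff_box K \<in> sets borel"
  unfolding sum_diff_box_def case_prod_beta atLeastAtMost_iff
  by (intro borel_closed closed_Collect_conj closed_Collect_le continuous_intros)

lemma measure_gauss_pair_sum_diff_box: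
  assumes "0 < \<sigma>1" "0 < \<sigma>2"
  shows "measure (gauss_pair \<sigma>1 \<sigma>2) (sum_diff_box K) = rhombus_prob \<sigma>1 \<sigma>2 K"
proof -
  have "measure (gauss_pair \<sigma>1 \<sigma>2) (sum_diff_box K)
      = measure (gauss_pair 1 1) ((\<lambda>(s, r). (\<sigma>1 * s, \<sigma>2 * r)) -` sum_diff_box K \<inter> space (gauss_pair 1 1))"
    unfolding gauss_pair_eq_distr_std[OF assms] by (intro measure_distr) auto
  also have "(\<lambda>(s, r). (\<sigma>1 * s, \<sigma>2 * r)) -` sum_diff_box K \<inter> space (gauss_pair 1 1) = rhombus \<sigma>1 \<sigma>2 K"
    using assms
    by (auto simp del: atLeastAtMost_iff
        simp add: sum_diff_box_def rhombus_def add_diff_mem_Icc_iff abs_mult space_pair_measure)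
  finally show ?thesis by (simp add: rhombus_prob_def)
qed

section \<open>The two-point box probability\<close>

lemma borel_measurable_real_pair:
  "f \<in> borel_measurable (lborel \<Otimes>\<^sub>M lborel) \<Longrightarrow> f \<in> borel_measurable (borel :: (real \<times> real) measure)"
  by (simp add: lborel_prod)

lemma nn_integral_lborel_sum_diff:
  fixes f :: "real \<times> real \<Rightarrow> ennreal"
  assumes f [measurable]: "f \<in> borel_measurable borel"
  shows "(\<integral>\<^sup>+z. f z \<partial>lborel) = 2 * (\<integral>\<^sup>+z. f (fst z + snd z, fst z - snd z) \<partial>lborel)"
proof -
  have [measurable]: "f \<in> borel_measurable (lborel \<Otimes>\<^sub>M lborel)"
    by (simp add: lborel_prod)
  have sub_x: "(\<integral>\<^sup>+x. f (x, y) \<partial>lborel) = 2 * (\<integral>\<^sup>+u. f (2 * u - y, y) \<partial>lborel)" for y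
    using nn_integral_real_affine[where c=2 and t="- y" and f="\<lambda>x. f (x, y)"] by simp
  have sub_y: "(\<integral>\<^sup>+y. f (2 * u - y, y) \<partial>lborel) = (\<integral>\<^sup>+v. f (u + v, u - v) \<partial>lborel)" for u
    using nn_integral_real_affine[where c="-1" and t=u and f="\<lambda>y. f (2 * u - y, y)"] by simp
  have "(\<integral>\<^sup>+z. f z \<partial>lborel) = (\<integral>\<^sup>+y. \<integral>\<^sup>+x. f (x, y) \<partial>lborel \<partial>lborel)"
    by (simp add: lborel_prod[symmetric] lborel_pair.nn_integral_snd)
  also have "\<dots> = 2 * (\<integral>\<^sup>+y. \<integral>\<^sup>+u. f (2 * u - y, y) \<partial>lborel \<partial>lborel)"
    by (simp add: sub_x nn_integral_cmult)
  also have "\<dots> = 2 * (\<integral>\<^sup>+u. \<integral>\<^sup>+y. f (2 * u - y, y) \<partial>lborel \<partial>lborel)"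
    by (subst lborel_pair.Fubini') simp_all
  also have "\<dots> = 2 * (\<integral>\<^sup>+z. f (fst z + snd z, fst z - snd z) \<partial>lborel)"
  proof -
    have "(\<lambda>z. f (fst z + snd z, fst z - snd z)) \<in> borel_measurable (lborel \<Otimes>\<^sub>M lborel)"
      by measurable
    from lborel.nn_integral_fst[OF this] show ?thesis
      by (simp add: sub_y lborel_prod)
  qed
  finally show ?thesis .
qed

lemma one_minus_diff_squares_sq:
  fixes a b :: real
  assumes "a\<^sup>2 + b\<^sup>2 = 1"
  shows "1 - (a\<^sup>2 - b\<^sup>2)\<^sup>2 = (2 * a * b)\<^sup>2"
proof -
  have "1 - (a\<^sup>2 - b\<^sup>2)\<^sup>2 = (a\<^sup>2 + b\<^sup>2)\<^sup>2 - (a\<^sup>2 - b\<^sup>2)\<^sup>2"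
    using assms by simp
  also have "\<dots> = (2 * a * b)\<^sup>2" by algebra
  finally show ?thesis .
qed

lemma bivariate_normal_density_sum_diff:
  assumes "0 < a" "0 < b" "a\<^sup>2 + b\<^sup>2 = 1"
  shows "2 * bivariate_normal_density (a\<^sup>2 - b\<^sup>2) (u + v, u - v) = normal_density 0 a u * normal_density 0 b v"
proof -
  note det = one_minus_diff_squares_sq[OF assms(3)]
  have "(u + v)\<^sup>2 - 2 * (a\<^sup>2 - b\<^sup>2) * (u + v) * (u - v) + (u - v)\<^sup>2
      = 2 * (a\<^sup>2 + b\<^sup>2) * (u\<^sup>2 + v\<^sup>2) - 2 * (a\<^sup>2 - b\<^sup>2) * (u\<^sup>2 - v\<^sup>2)"
    using assms(3) by algebra
  also have "\<dots> = 4 * (b\<^sup>2 * u\<^sup>2 + a\<^sup>2 * v\<^sup>2)" by algebra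
  finally have quad: "(u + v)\<^sup>2 - 2 * (a\<^sup>2 - b\<^sup>2) * (u + v) * (u - v) + (u - v)\<^sup>2 = 4 * (b\<^sup>2 * u\<^sup>2 + a\<^sup>2 * v\<^sup>2)" .
  have expo: "- ((u + v)\<^sup>2 - 2 * (a\<^sup>2 - b\<^sup>2) * (u + v) * (u - v) + (u - v)\<^sup>2) / (2 * (1 - (a\<^sup>2 - b\<^sup>2)\<^sup>2))
      = - u\<^sup>2 / (2 * a\<^sup>2) + - v\<^sup>2 / (2 * b\<^sup>2)"
    unfolding quad det using assms by (simp add: field_simps power2_eq_square)
  have sqrt_det: "sqrt (1 - (a\<^sup>2 - b\<^sup>2)\<^sup>2) = 2 * a * b"
    unfolding det using assms by simp
  have density: "normal_density 0 \<sigma> t = exp (- t\<^sup>2 / (2 * \<sigma>\<^sup>2)) / (sqrt (2 * pi) * \<sigma>)" if "0 < \<sigma>" for \<sigma> t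
    using that by (simp add: normal_density_def real_sqrt_mult)
  have "sqrt (2 * pi) * sqrt (2 * pi) = 2 * pi" by simp
  then show ?thesis
    unfolding bivariate_normal_density_def split expo sqrt_det density[OF assms(1)] density[OF assms(2)] exp_add
    using assms by (simp add: field_simps)
qed

lemma borel_measurable_bivariate_normal_density:
  assumes "\<rho>\<^sup>2 < 1"
  shows "bivariate_normal_density \<rho> \<in> borel_measurable borel"
proof (rule borel_measurable_continuous_onI)
  show "continuous_on UNIV (bivariate_normal_density \<rho>)"
    unfolding bivariate_normal_density_def case_prod_beta using assms by (intro continuous_intros) auto
qed

lemma bivariate_normal_eq_distr_sum_diff:
  assumes "0 < a" "0 < b" "a\<^sup>2 + b\<^sup>2 = 1"
  shows "density lborel (bivariate_normal_density (a\<^sup>2 - b\<^sup>2))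
    = distr (gauss_pair a b) lborel (\<lambda>(u, v). (u + v, u - v))" (is "?L = ?R")
proof (rule measure_eqI)
  define T where "T z = (fst z + snd z, fst z - snd z)" for z :: "real \<times> real"
  have T_eq: "T = (\<lambda>(u, v). (u + v, u - v))"
    by (simp add: T_def fun_eq_iff)
  have T_measurable [measurable]: "T \<in> borel_measurable borel"
    unfolding T_def by (intro borel_measurable_continuous_onI continuous_intros)
  have "0 < (2 * a * b)\<^sup>2"
    using assms(1,2) by simp
  then have "(a\<^sup>2 - b\<^sup>2)\<^sup>2 < 1"
    using one_minus_diff_squares_sq[OF assms(3)] by linarith
  note [measurable] = borel_measurable_bivariate_normal_density[OF this]
  show "sets ?L = sets ?R"
    by simp
  fix A assume "A \<in> sets ?L"
  then have A [measurable]: "A \<in> sets borel" by simp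
  have "emeasure ?L A = (\<integral>\<^sup>+z. ennreal (bivariate_normal_density (a\<^sup>2 - b\<^sup>2) z) * indicator A z \<partial>lborel)"
    by (rule emeasure_density) simp_all
  also have "\<dots> = 2 * (\<integral>\<^sup>+z. ennreal (bivariate_normal_density (a\<^sup>2 - b\<^sup>2) (T z)) * indicator A (T z) \<partial>lborel)"
    using nn_integral_lborel_sum_diff[of "\<lambda>z. ennreal (bivariate_normal_density (a\<^sup>2 - b\<^sup>2) z) * indicator A z"]
    by (simp add: T_def)
  also have "\<dots> = (\<integral>\<^sup>+z. ennreal (normal_density 0 a (fst z) * normal_density 0 b (snd z)) * indicator (T -` A) z \<partial>lborel)"
  proof -
    have "ennreal (normal_density 0 a (fst z) * normal_density 0 b (snd z)) = 2 * ennreal (bivariate_normal_density (a\<^sup>2 - b\<^sup>2) (T z))" for z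
      using bivariate_normal_density_sum_diff[OF assms, of "fst z" "snd z"]
      by (metis T_def ennreal_mult' ennreal_numeral zero_le_numeral)
    then show ?thesis
      by (subst nn_integral_cmult[symmetric]) (auto simp: mult.assoc intro!: nn_integral_cong split: split_indicator)
  qed
  also have "\<dots> = emeasure (gauss_pair a b) (T -` A)"
  proof -
    have "(\<lambda>z. ennreal (normal_density 0 a (fst z) * normal_density 0 b (snd z))) \<in> borel_measurable borel"
      by (rule borel_measurable_real_pair) measurable
    moreover have "T -` A \<in> sets borel"
      using measurable_sets_borel[OF T_measurable A] .
    ultimately show ?thesis
      unfolding gauss_pair_eq_density[OF assms(2)] split_beta' by (subst emeasure_density) simp_all
  qed
  also have "\<dots> = emeasure ?R A"
    unfolding T_eq[symmetric]
    by (subst emeasure_distr) (auto simp: space_pair_measure measurable_cong_sets[OF sets_gauss_pair refl])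
  finally show "emeasure ?L A = emeasure ?R A" .
qed

lemma f1_eq_rhombus_prob:
  assumes "0 < x" "x < 1"
  shows "f1 x K = rhombus_prob (sqrt (1 - x)) (sqrt x) K"
proof -
  define a b where "a = sqrt (1 - x)" and "b = sqrt x"
  have ab: "0 < a" "0 < b" "a\<^sup>2 + b\<^sup>2 = 1" and rho: "a\<^sup>2 - b\<^sup>2 = 1 - 2 * x"
    using assms by (simp_all add: a_def b_def)
  have T: "(\<lambda>(u, v). (u + v, u - v)) \<in> measurable (gauss_pair a b) lborel"
    by (simp add: measurable_cong_sets[OF sets_gauss_pair refl] split_beta' borel_measurable_continuous_onI continuous_intros)
  have "f1 x K = measure (distr (gauss_pair a b) lborel (\<lambda>(u, v). (u + v, u - v))) ({-K..K} \<times> {-K..K})"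
    unfolding f1_def rho[symmetric] bivariate_normal_eq_distr_sum_diff[OF ab] ..
  also have "\<dots> = measure (gauss_pair a b) (sum_diff_box K)"
    using borel_closed[OF closed_Times[OF closed_atLeastAtMost closed_atLeastAtMost]]
    by (subst measure_distr[OF T]) (auto simp: space_pair_measure sum_diff_box_def intro!: arg_cong[where f="measure _"])
  also have "\<dots> = rhombus_prob a b K"
    using ab(1,2) by (rule measure_gauss_pair_sum_diff_box)
  finally show ?thesis by (simp add: a_def b_def)
qed

section \<open>Two solutions of the same disorder\<close>

lemma (in prob_space) prob_INT_indep_vars_identically_distributed:
  assumes "indep_vars (\<lambda>_. S) Y I" "finite I" "I \<noteq> {}"
    and "\<And>i. i \<in> I \<Longrightarrow> distr M S (Y i) = Q" "B \<in> sets S"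
  shows "prob (\<Inter>i\<in>I. Y i -` B \<inter> space M) = measure Q B ^ card I"
proof -
  have "prob (\<Inter>i\<in>I. Y i -` B \<inter> space M) = (\<Prod>i\<in>I. prob (Y i -` B \<inter> space M))"
    using assms by (intro indep_varsD) auto
  also have "\<dots> = (\<Prod>i\<in>I. measure Q B)"
  proof (rule prod.cong[OF refl])
    fix i assume "i \<in> I"
    then have "Y i \<in> measurable M S"
      using assms(1) by (simp add: indep_vars_def)
    with assms(4)[OF \<open>i \<in> I\<close>] show "prob (Y i -` B \<inter> space M) = measure Q B"
      using measure_distr[OF _ assms(5)] by metis
  qed
  finally show ?thesis by simp
qed

lemma prob_space_disorder: "0 < N \<Longrightarrow> prob_space (disorder N M)"
  unfolding disorder_def by (intro prob_space_PiM prob_space_normal_density) simp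

lemma borel_measurable_PiM_gauss_component:
  "p \<in> I \<Longrightarrow> (\<lambda>\<xi>. \<xi> p) \<in> borel_measurable (PiM I (\<lambda>_. gauss \<sigma>))"
  using measurable_component_singleton[of p I "\<lambda>_. gauss \<sigma>"] by simp

lemma indep_vars_disorder_entries:
  assumes "0 < N" "0 < M"
  shows "prob_space.indep_vars (disorder N M) (\<lambda>_. gauss (sqrt (1 / real N))) (\<lambda>p \<xi>. \<xi> p) ({..<N} \<times> {..<M})"
proof -
  interpret D: prob_space "disorder N M" by (rule prob_space_disorder) fact
  let ?I = "{..<N} \<times> {..<M}"
  have entry: "(\<lambda>\<xi>. \<xi> p) \<in> measurable (disorder N M) (gauss (sqrt (1 / real N)))" if "p \<in> ?I" for p
    unfolding disorder_def using that by (rule measurable_component_singleton)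
  have "distr (disorder N M) (PiM ?I (\<lambda>_. gauss (sqrt (1 / real N)))) (\<lambda>\<xi>. \<lambda>p\<in>?I. \<xi> p)
      = distr (disorder N M) (disorder N M) (\<lambda>\<xi>. \<xi>)"
    by (rule distr_cong) (auto simp: disorder_def space_PiM PiE_def extensional_restrict)
  also have "\<dots> = disorder N M" by simp
  also have "\<dots> = PiM ?I (\<lambda>p. distr (disorder N M) (gauss (sqrt (1 / real N))) (\<lambda>\<xi>. \<xi> p))"
    unfolding disorder_def using assms
    by (intro PiM_cong refl distr_PiM_component[symmetric] prob_space_normal_density) auto
  finally show ?thesis
    using assms by (subst D.indep_vars_iff_distr_eq_PiM'[OF _ entry]) (auto simp: disorder_def)
qed

lemma distributed_disorder_signed_entry:
  assumes "0 < N" "p \<in> {..<N} \<times> {..<M}" "\<bar>c\<bar> = 1"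
  shows "distributed (disorder N M) lborel (\<lambda>\<xi>. c * \<xi> p) (normal_density 0 (sqrt (1 / real N)))"
proof -
  interpret D: prob_space "disorder N M" by (rule prob_space_disorder) fact
  have entry: "(\<lambda>\<xi>. \<xi> p) \<in> measurable (disorder N M) (gauss (sqrt (1 / real N)))"
    unfolding disorder_def using assms(2) by (rule measurable_component_singleton)
  have "distr (disorder N M) lborel (\<lambda>\<xi>. \<xi> p) = distr (disorder N M) (gauss (sqrt (1 / real N))) (\<lambda>\<xi>. \<xi> p)"
    by (rule distr_cong) auto
  also have "\<dots> = gauss (sqrt (1 / real N))"
    unfolding disorder_def using assms by (intro distr_PiM_component prob_space_normal_density) auto
  finally have "distributed (disorder N M) lborel (\<lambda>\<xi>. \<xi> p) (normal_density 0 (sqrt (1 / real N)))"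
    using entry by (auto simp: distributed_def)
  from D.normal_density_affine[OF this, where \<alpha>=c and \<beta>=0] assms show ?thesis
    by auto
qed

lemma distributed_disorder_block_sum:
  assumes "0 < N" "\<mu> < M" "A \<subseteq> {..<N}" "A \<noteq> {}" "\<And>i. i \<in> A \<Longrightarrow> \<bar>w i\<bar> = 1"
  shows "distributed (disorder N M) lborel (\<lambda>\<xi>. \<Sum>i\<in>A. w i * \<xi> (i, \<mu>))
           (normal_density 0 (sqrt (real (card A) / real N)))"
proof -
  interpret D: prob_space "disorder N M" by (rule prob_space_disorder) fact
  have "finite A" using assms(3) finite_subset by blast
  have block: "A \<times> {\<mu>} \<subseteq> {..<N} \<times> {..<M}" using assms by auto
  have "D.indep_vars (\<lambda>_. borel) (\<lambda>p \<xi>. w (fst p) * \<xi> p) ({..<N} \<times> {..<M})"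
    using assms by (intro D.indep_vars_compose2[OF indep_vars_disorder_entries, where Y="\<lambda>p v. w (fst p) * v"]) auto
  then have "distributed (disorder N M) lborel (\<lambda>\<xi>. \<Sum>p\<in>A \<times> {\<mu>}. w (fst p) * \<xi> p)
     (normal_density (\<Sum>p\<in>A \<times> {\<mu>}. 0) (sqrt (\<Sum>p\<in>A \<times> {\<mu>}. (sqrt (1 / real N))\<^sup>2)))"
    using assms block \<open>finite A\<close>
    by (intro D.sum_indep_normal D.indep_vars_subset[OF _ block] distributed_disorder_signed_entry) auto
  moreover have "(\<Sum>p\<in>A \<times> {\<mu>}. w (fst p) * \<xi> p) = (\<Sum>i\<in>A. w i * \<xi> (i, \<mu>))" for \<xi> :: "nat \<times> nat \<Rightarrow> real"
  proof -
    have "A \<times> {\<mu>} = (\<lambda>i. (i, \<mu>)) ` A" by auto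
    then show ?thesis by (simp add: sum.reindex inj_on_def)
  qed
  ultimately show ?thesis
    using assms \<open>finite A\<close> by (simp add: card_cartesian_product)
qed

lemma distr_disorder_two_block_sums:
  assumes "0 < N" "\<mu> < M" "A \<subseteq> {..<N}" "B \<subseteq> {..<N}" "A \<inter> B = {}" "A \<noteq> {}" "B \<noteq> {}"
    and w: "\<And>i. i \<in> A \<union> B \<Longrightarrow> \<bar>w i\<bar> = 1"
  shows "distr (disorder N M) lborel (\<lambda>\<xi>. (\<Sum>i\<in>A. w i * \<xi> (i, \<mu>), \<Sum>i\<in>B. w i * \<xi> (i, \<mu>)))
     = gauss_pair (sqrt (real (card A) / real N)) (sqrt (real (card B) / real N))"
proof -
  interpret D: prob_space "disorder N M" by (rule prob_space_disorder) fact
  let ?G = "gauss (sqrt (1 / real N))"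
  define block_sum where "block_sum C y = (\<Sum>i\<in>C. w i * y (i, \<mu>))" for C and y :: "nat \<times> nat \<Rightarrow> real"
  have block_sum_measurable: "block_sum C \<in> measurable (PiM (C \<times> {\<mu>}) (\<lambda>_. ?G)) lborel" for C
    unfolding block_sum_def by (auto intro!: borel_measurable_sum borel_measurable_times borel_measurable_PiM_gauss_component)
  have "D.indep_var (PiM (A \<times> {\<mu>}) (\<lambda>_. ?G)) (\<lambda>\<xi>. restrict \<xi> (A \<times> {\<mu>}))
      (PiM (B \<times> {\<mu>}) (\<lambda>_. ?G)) (\<lambda>\<xi>. restrict \<xi> (B \<times> {\<mu>}))"
    using assms by (intro D.indep_var_restrict[OF indep_vars_disorder_entries]) auto
  from D.indep_var_compose[OF this block_sum_measurable block_sum_measurable]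
  have "D.indep_var lborel (\<lambda>\<xi>. block_sum A \<xi>) lborel (\<lambda>\<xi>. block_sum B \<xi>)"
    by (simp add: comp_def block_sum_def)
  then have "distributed (disorder N M) (lborel \<Otimes>\<^sub>M lborel) (\<lambda>\<xi>. (block_sum A \<xi>, block_sum B \<xi>))
      (\<lambda>(x, y). ennreal (normal_density 0 (sqrt (real (card A) / real N)) x)
        * ennreal (normal_density 0 (sqrt (real (card B) / real N)) y))"
    using assms unfolding block_sum_def
    by (intro D.distributed_joint_indep lborel.sigma_finite_measure_axioms distributed_disorder_block_sum) auto
  moreover have "0 < sqrt (real (card B) / real N)"
    using assms finite_subset[OF assms(4)] by (simp add: card_gt_0_iff)
  ultimately show ?thesis
    by (simp add: distributed_def lborel_prod gauss_pair_eq_density split_beta' ennreal_mult normal_density_nonneg block_sum_def)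
qed

lemma indep_vars_disorder_rows:
  assumes "0 < N" "0 < M"
    and f: "\<And>\<mu>. \<mu> < M \<Longrightarrow> f \<mu> \<in> measurable (PiM ({..<N} \<times> {\<mu>}) (\<lambda>_. gauss (sqrt (1 / real N)))) S"
  shows "prob_space.indep_vars (disorder N M) (\<lambda>_. S) (\<lambda>\<mu> \<xi>. f \<mu> (restrict \<xi> ({..<N} \<times> {\<mu>}))) {..<M}"
proof -
  interpret D: prob_space "disorder N M" by (rule prob_space_disorder) fact
  have "D.indep_vars (\<lambda>\<mu>. PiM ({..<N} \<times> {\<mu>}) (\<lambda>_. gauss (sqrt (1 / real N)))) (\<lambda>\<mu> \<xi>. restrict \<xi> ({..<N} \<times> {\<mu>})) {..<M}"
    using D.indep_vars_restrict[OF indep_vars_disorder_entries[OF assms(1,2)], of "{..<M}" "\<lambda>\<mu>. {..<N} \<times> {\<mu>}"]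
    by (auto simp: disjoint_family_on_def)
  from D.indep_vars_compose2[OF this f] show ?thesis by simp
qed

lemma cube_values: "w \<in> cube N \<Longrightarrow> i < N \<Longrightarrow> w i = 1 \<or> w i = -1"
  unfolding cube_def using PiE_mem by fastforce

lemma sums_split_agreement:
  fixes c :: "nat \<Rightarrow> real"
  assumes "w1 \<in> cube N" "w2 \<in> cube N"
  defines "A \<equiv> {i \<in> {..<N}. w1 i = w2 i}" and "B \<equiv> {i \<in> {..<N}. w1 i \<noteq> w2 i}"
  shows "(\<Sum>i<N. w1 i * c i) = (\<Sum>i\<in>A. w1 i * c i) + (\<Sum>i\<in>B. w1 i * c i)"
    and "(\<Sum>i<N. w2 i * c i) = (\<Sum>i\<in>A. w1 i * c i) - (\<Sum>i\<in>B. w1 i * c i)"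
proof -
  have "A \<union> B = {..<N}" "A \<inter> B = {}" "finite A" "finite B"
    by (auto simp: A_def B_def)
  then have split: "(\<Sum>i<N. f i) = (\<Sum>i\<in>A. f i) + (\<Sum>i\<in>B. f i)" for f :: "nat \<Rightarrow> real"
    by (metis sum.union_disjoint)
  have "(\<Sum>i\<in>A. w2 i * c i) = (\<Sum>i\<in>A. w1 i * c i)"
    by (rule sum.cong) (simp_all add: A_def)
  moreover have "w2 i = - w1 i" if "i \<in> B" for i
  proof -
    have "i < N" "w1 i \<noteq> w2 i" using that by (simp_all add: B_def)
    then show ?thesis using cube_values[OF assms(1)] cube_values[OF assms(2)] by force
  qed
  then have "(\<Sum>i\<in>B. w2 i * c i) = - (\<Sum>i\<in>B. w1 i * c i)"
    by (simp add: sum_negf[symmetric])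
  ultimately show "(\<Sum>i<N. w1 i * c i) = (\<Sum>i\<in>A. w1 i * c i) + (\<Sum>i\<in>B. w1 i * c i)"
    "(\<Sum>i<N. w2 i * c i) = (\<Sum>i\<in>A. w1 i * c i) - (\<Sum>i\<in>B. w1 i * c i)"
    by (simp_all add: split)
qed

lemma prob_both_solutions:
  assumes "0 < N" "0 < M" "w1 \<in> cube N" "w2 \<in> cube N" "hamming N w1 w2 = d" "0 < d" "d < N"
  shows "measure (disorder N M) {\<xi> \<in> space (disorder N M). is_solution N M K \<xi> w1 \<and> is_solution N M K \<xi> w2}
       = rhombus_prob (sqrt (1 - real d / real N)) (sqrt (real d / real N)) K ^ M"
proof -
  interpret P: prob_space "disorder N M" by (rule prob_space_disorder) fact
  define A where "A = {i \<in> {..<N}. w1 i = w2 i}"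
  define B where "B = {i \<in> {..<N}. w1 i \<noteq> w2 i}"
  define Y where "Y \<mu> \<xi> = (\<Sum>i\<in>A. w1 i * \<xi> (i, \<mu>), \<Sum>i\<in>B. w1 i * \<xi> (i, \<mu>))"
    for \<mu> :: nat and \<xi> :: "nat \<times> nat \<Rightarrow> real"
  have AB: "A \<subseteq> {..<N}" "B \<subseteq> {..<N}" "A \<inter> B = {}" "A \<union> B = {..<N}"
    by (auto simp: A_def B_def)
  have card_B: "card B = d"
    using assms(5) by (simp add: hamming_def B_def)
  moreover have "card A + card B = N"
    using card_Un_disjoint[of A B] finite_subset[OF AB(1)] finite_subset[OF AB(2)] AB(3,4) by simp
  ultimately have card_A: "card A = N - d" by simp
  have "{\<xi> \<in> space (disorder N M). is_solution N M K \<xi> w1 \<and> is_solution N M K \<xi> w2}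
      = (\<Inter>\<mu>\<in>{..<M}. Y \<mu> -` sum_diff_box K \<inter> space (disorder N M))"
    using assms(2-4) sums_split_agreement[OF assms(3,4)]
    by (auto simp: is_solution_def sum_diff_box_def Y_def A_def B_def)
  also have "P.prob \<dots> = measure (gauss_pair (sqrt (real (card A) / real N)) (sqrt (real (card B) / real N)))
      (sum_diff_box K) ^ card {..<M}"
  proof (rule P.prob_INT_indep_vars_identically_distributed)
    have "P.indep_vars (\<lambda>_. lborel) (\<lambda>\<mu> \<xi>. Y \<mu> (restrict \<xi> ({..<N} \<times> {\<mu>}))) {..<M}"
      unfolding Y_def lborel_prod[symmetric] using AB
      by (intro indep_vars_disorder_rows assms)
        (auto intro!: measurable_Pair borel_measurable_sum borel_measurable_times borel_measurable_PiM_gauss_component)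
    moreover have "(\<lambda>\<mu> \<xi>. Y \<mu> (restrict \<xi> ({..<N} \<times> {\<mu>}))) = Y"
      using AB by (auto simp: Y_def fun_eq_iff intro!: sum.cong)
    ultimately show "P.indep_vars (\<lambda>_. lborel) Y {..<M}" by simp
    show "distr (disorder N M) lborel (Y \<mu>) = gauss_pair (sqrt (real (card A) / real N)) (sqrt (real (card B) / real N))"
      if "\<mu> \<in> {..<M}" for \<mu>
    proof -
      have "\<bar>w1 i\<bar> = 1" if "i \<in> A \<union> B" for i
      proof -
        have "i < N" using that AB(4) by blast
        then show ?thesis using cube_values[OF assms(3)] by force
      qed
      moreover have "A \<noteq> {}" "B \<noteq> {}"
        using card_A card_B assms(6,7) by (metis card.empty less_irrefl zero_less_diff)+
      ultimately show ?thesis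
        unfolding Y_def using assms(1) AB that by (intro distr_disorder_two_block_sums) auto
    qed
  qed (use assms in auto)
  finally show ?thesis
    using assms by (simp add: card_A card_B measure_gauss_pair_sum_diff_box of_nat_diff diff_divide_distrib)
qed

section \<open>The first moment bound\<close>

lemma finite_cube: "finite (cube N)"
  unfolding cube_def by (intro finite_PiE) auto

lemma card_cube: "card (cube N) = 2 ^ N"
  unfolding cube_def by (subst card_PiE) (auto simp: numeral_2_eq_2)

lemma card_hamming_sphere_le:
  assumes "w \<in> cube N"
  shows "card {w' \<in> cube N. hamming N w w' = d} \<le> N choose d"
proof -
  let ?diff = "\<lambda>w'. {i \<in> {..<N}. w i \<noteq> w' i}"
  have "inj_on ?diff (cube N)"
  proof (rule inj_onI)
    fix u v assume u: "u \<in> cube N" and v: "v \<in> cube N" and eq: "?diff u = ?diff v"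
    show "u = v"
    proof (rule ext)
      fix i
      show "u i = v i"
      proof (cases "i < N")
        case True
        have "i \<in> ?diff u \<longleftrightarrow> i \<in> ?diff v" using eq by simp
        with True cube_values[OF assms True] cube_values[OF u True] cube_values[OF v True]
        show ?thesis by auto
      next
        case False
        then show ?thesis
          using PiE_arb[OF u[unfolded cube_def]] PiE_arb[OF v[unfolded cube_def]] by simp
      qed
    qed
  qed
  then have "inj_on ?diff {w' \<in> cube N. hamming N w w' = d}"
    by (rule inj_on_subset) blast
  moreover have "?diff ` {w' \<in> cube N. hamming N w w' = d} \<subseteq> {D. D \<subseteq> {..<N} \<and> card D = d}"
    by (auto simp: hamming_def)
  moreover have "finite {D. D \<subseteq> {..<N} \<and> card D = d}"
    by simp
  ultimately have "card {w' \<in> cube N. hamming N w w' = d} \<le> card {D. D \<subseteq> {..<N} \<and> card D = d}"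
    by (rule card_inj_on_le)
  also have "\<dots> = N choose d"
    by (subst n_subsets) auto
  finally show ?thesis .
qed

definition pairs_at_distance :: "nat \<Rightarrow> nat \<Rightarrow> ((nat \<Rightarrow> real) \<times> (nat \<Rightarrow> real)) set" where
  "pairs_at_distance N d = (SIGMA w:cube N. {w' \<in> cube N. hamming N w w' = d})"

lemma finite_pairs_at_distance: "finite (pairs_at_distance N d)"
  unfolding pairs_at_distance_def using finite_cube by auto

lemma card_pairs_at_distance_le: "card (pairs_at_distance N d) \<le> 2 ^ N * (N choose d)"
proof -
  have "card (pairs_at_distance N d) = (\<Sum>w\<in>cube N. card {w' \<in> cube N. hamming N w w' = d})"
    unfolding pairs_at_distance_def using finite_cube by (subst card_SigmaI) auto
  also have "\<dots> \<le> (\<Sum>w\<in>cube N. N choose d)"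
    by (intro sum_mono card_hamming_sphere_le)
  finally show ?thesis by (simp add: card_cube)
qed

lemma binomial_le_exp_H2:
  assumes "0 < d" "d < N"
  shows "real (N choose d) \<le> exp (real N * H2 (real d / real N))"
proof -
  define t where "t = real d / real N"
  have t: "0 < t" "t < 1" using assms by (auto simp: t_def)
  have "real (N choose d) * t ^ d * (1 - t) ^ (N - d) \<le> (\<Sum>k\<le>N. real (N choose k) * t ^ k * (1 - t) ^ (N - k))"
    using assms t by (intro member_le_sum[where f="\<lambda>k. real (N choose k) * t ^ k * (1 - t) ^ (N - k)"]) auto
  also have "\<dots> = 1"
    using binomial_ring[of t "1 - t" N] by simp
  finally have "ln (real (N choose d) * t ^ d * (1 - t) ^ (N - d)) \<le> 0"
    using assms t by (subst ln_le_zero_iff) auto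
  then have "ln (real (N choose d)) \<le> - real d * ln t - real (N - d) * ln (1 - t)"
    using assms t by (simp add: ln_mult ln_realpow)
  also have "\<dots> = real N * H2 t"
    using assms by (simp add: H2_def t_def of_nat_diff field_simps)
  finally have "ln (real (N choose d)) \<le> real N * H2 t" .
  moreover have "0 < real (N choose d)"
    using assms by simp
  ultimately show ?thesis
    unfolding t_def by (metis exp_ln exp_le_cancel_iff)
qed

lemma sets_disorder_solutions:
  assumes "0 < M"
  shows "{\<xi> \<in> space (disorder N M). is_solution N M K \<xi> w} \<in> sets (disorder N M)"
proof (cases "w \<in> cube N")
  case True
  have "(\<lambda>\<xi>. \<Sum>i<N. w i * \<xi> (i, \<mu>)) \<in> borel_measurable (disorder N M)" if "\<mu> < M" for \<mu>
    unfolding disorder_def using that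
    by (auto intro!: borel_measurable_sum borel_measurable_times borel_measurable_PiM_gauss_component)
  then have "(\<Inter>\<mu>\<in>{..<M}. (\<lambda>\<xi>. \<Sum>i<N. w i * \<xi> (i, \<mu>)) -` {-K..K} \<inter> space (disorder N M)) \<in> sets (disorder N M)"
    using assms by (intro sets.finite_INT) (auto intro: measurable_sets)
  also have "(\<Inter>\<mu>\<in>{..<M}. (\<lambda>\<xi>. \<Sum>i<N. w i * \<xi> (i, \<mu>)) -` {-K..K} \<inter> space (disorder N M))
      = {\<xi> \<in> space (disorder N M). is_solution N M K \<xi> w}"
    using True assms by (auto simp: is_solution_def)
  finally show ?thesis .
next
  case False
  then show ?thesis by (simp add: is_solution_def)
qed

lemma measure_Z2_pos_le:
  assumes "0 < N" "0 < M" "d = nat \<lfloor>real N * x\<rfloor>" "0 < d" "d < N"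
  shows "measure (disorder N M) {\<xi> \<in> space (disorder N M). 0 < Z2 N M x K \<xi>}
    \<le> 2 ^ N * real (N choose d) * rhombus_prob (sqrt (1 - real d / real N)) (sqrt (real d / real N)) K ^ M"
proof -
  interpret P: prob_space "disorder N M" by (rule prob_space_disorder) fact
  define q where "q = rhombus_prob (sqrt (1 - real d / real N)) (sqrt (real d / real N)) K"
  define E where "E p = {\<xi> \<in> space (disorder N M). is_solution N M K \<xi> (fst p) \<and> is_solution N M K \<xi> (snd p)}" for p
  have E_sets: "E p \<in> P.events" for p
    using sets_disorder_solutions[OF assms(2), where K=K and w="fst p" and N=N]
      sets_disorder_solutions[OF assms(2), where K=K and w="snd p" and N=N]
    by (simp add: E_def Collect_conj_eq[symmetric] sets.Int)
  have "{\<xi> \<in> space (disorder N M). 0 < Z2 N M x K \<xi>} \<subseteq> (\<Union>p\<in>pairs_at_distance N d. E p)"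
    by (auto simp: Z2_def card_gt_0_iff E_def pairs_at_distance_def is_solution_def assms(3))
  then have "P.prob {\<xi> \<in> space (disorder N M). 0 < Z2 N M x K \<xi>} \<le> P.prob (\<Union>p\<in>pairs_at_distance N d. E p)"
    using E_sets finite_pairs_at_distance by (intro P.finite_measure_mono) auto
  also have "\<dots> \<le> (\<Sum>p\<in>pairs_at_distance N d. P.prob (E p))"
    using E_sets finite_pairs_at_distance by (intro P.finite_measure_subadditive_finite) auto
  also have "\<dots> = (\<Sum>p\<in>pairs_at_distance N d. q ^ M)"
  proof (rule sum.cong[OF refl])
    fix p assume "p \<in> pairs_at_distance N d"
    then show "P.prob (E p) = q ^ M"
      unfolding E_def q_def using assms(1,2,4,5)
      by (intro prob_both_solutions) (auto simp: pairs_at_distance_def)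
  qed
  also have "\<dots> = real (card (pairs_at_distance N d)) * q ^ M"
    by simp
  also have "\<dots> \<le> 2 ^ N * real (N choose d) * q ^ M"
  proof (rule mult_right_mono)
    show "real (card (pairs_at_distance N d)) \<le> 2 ^ N * real (N choose d)"
      using of_nat_mono[OF card_pairs_at_distance_le[of N d]] by simp
  qed (simp add: q_def rhombus_prob_def)
  finally show ?thesis unfolding q_def .
qed

lemma measure_Z2_pos_le_exp:
  assumes "0 < N" "0 < M" "d = nat \<lfloor>real N * x\<rfloor>" "0 < d" "d < N"
    and "rhombus_prob (sqrt (1 - real d / real N)) (sqrt (real d / real N)) K \<le> g" "0 < g"
  shows "measure (disorder N M) {\<xi> \<in> space (disorder N M). 0 < Z2 N M x K \<xi>}
    \<le> exp (real N * (ln 2 + H2 (real d / real N) + real M / real N * ln g))"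
proof -
  have "measure (disorder N M) {\<xi> \<in> space (disorder N M). 0 < Z2 N M x K \<xi>}
      \<le> 2 ^ N * real (N choose d) * rhombus_prob (sqrt (1 - real d / real N)) (sqrt (real d / real N)) K ^ M"
    using assms(1-5) by (rule measure_Z2_pos_le)
  also have "\<dots> \<le> 2 ^ N * exp (real N * H2 (real d / real N)) * g ^ M"
    using assms by (intro mult_mono power_mono binomial_le_exp_H2) (auto simp: rhombus_prob_def)
  also have "\<dots> = exp (real N * ln 2 + real N * H2 (real d / real N) + real M * ln g)"
    using \<open>0 < g\<close> by (simp add: exp_add exp_of_nat_mult)
  also have "\<dots> = exp (real N * (ln 2 + H2 (real d / real N) + real M / real N * ln g))"
    using \<open>0 < N\<close> by (simp add: field_simps)
  finally show ?thesis .
qed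

section \<open>Asymptotics\<close>

lemma tendsto_nat_floor_mult_div:
  fixes c :: real
  assumes "0 \<le> c"
  shows "(\<lambda>N. real (nat \<lfloor>real N * c\<rfloor>) / real N) \<longlonglongrightarrow> c"
proof (rule tendsto_sandwich[where f="\<lambda>N. c - 1 / real N" and h="\<lambda>N. c"])
  have floor: "real (nat \<lfloor>real N * c\<rfloor>) = of_int \<lfloor>real N * c\<rfloor>" for N
    using assms by simp
  show "\<forall>\<^sub>F N in sequentially. c - 1 / real N \<le> real (nat \<lfloor>real N * c\<rfloor>) / real N"
    using eventually_gt_at_top[of 0]
  proof eventually_elim
    fix N :: nat assume "0 < N"
    have "c - 1 / real N = (real N * c - 1) / real N"
      using \<open>0 < N\<close> by (simp add: field_simps)
    also have "\<dots> \<le> of_int \<lfloor>real N * c\<rfloor> / real N"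
      by (intro divide_right_mono) linarith+
    finally show "c - 1 / real N \<le> real (nat \<lfloor>real N * c\<rfloor>) / real N"
      by (simp only: floor)
  qed
  show "\<forall>\<^sub>F N in sequentially. real (nat \<lfloor>real N * c\<rfloor>) / real N \<le> c"
  proof (intro always_eventually allI)
    fix N :: nat
    have "real (nat \<lfloor>real N * c\<rfloor>) \<le> real N * c"
      by (simp only: floor of_int_floor_le)
    then show "real (nat \<lfloor>real N * c\<rfloor>) / real N \<le> c"
      using assms by (cases "N = 0") (simp_all add: pos_divide_le_eq mult.commute)
  qed
  show "(\<lambda>N. c - 1 / real N) \<longlonglongrightarrow> c"
    using tendsto_diff[OF tendsto_const lim_const_over_n[of 1]] by simp
qed simp

lemma tendsto_zero_if_le_exp_mult:
  fixes p e :: "nat \<Rightarrow> real"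
  assumes "\<forall>\<^sub>F N in sequentially. p N \<le> exp (real N * e N)" "\<And>N. 0 \<le> p N" "e \<longlonglongrightarrow> L" "L < 0"
  shows "p \<longlonglongrightarrow> 0"
proof (rule tendsto_sandwich[where f="\<lambda>_. 0" and h="\<lambda>N. exp (L / 2) ^ N"])
  have "\<forall>\<^sub>F N in sequentially. e N < L / 2"
    using assms(3,4) by (intro order_tendstoD) auto
  with assms(1) show "\<forall>\<^sub>F N in sequentially. p N \<le> exp (L / 2) ^ N"
  proof eventually_elim
    fix N assume "p N \<le> exp (real N * e N)" "e N < L / 2"
    then have "p N \<le> exp (real N * (L / 2))"
      by (smt (verit) exp_le_cancel_iff mult_left_mono of_nat_0_le_iff)
    then show "p N \<le> exp (L / 2) ^ N"
      by (simp only: exp_of_nat_mult)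
  qed
  show "(\<lambda>N. exp (L / 2) ^ N) \<longlonglongrightarrow> 0"
    using assms(4) by (intro LIMSEQ_power_zero) simp
qed (use assms(2) in simp_all)

lemma isCont_H2: "0 < x \<Longrightarrow> x < 1 \<Longrightarrow> isCont H2 x"
  unfolding H2_def by (intro continuous_intros) auto

lemma tendsto_numM_div: "0 \<le> \<alpha> \<Longrightarrow> (\<lambda>N. real (numM \<alpha> N) / real N) \<longlonglongrightarrow> \<alpha>"
  using tendsto_nat_floor_mult_div[of \<alpha>] by (simp add: numM_def mult.commute)

lemma ex_larger_threshold_exponent_neg:
  assumes "0 < K" "0 < x" "x < 1" "alpha_UB x K < \<alpha>"
  shows "\<exists>K' > K. ln 2 + H2 x + \<alpha> * ln (rhombus_prob (sqrt (1 - x)) (sqrt x) K') < 0"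
proof -
  define a b where "a = sqrt (1 - x)" and "b = sqrt x"
  have ab: "0 < a" "0 < b" using assms by (simp_all add: a_def b_def)
  have "ln (rhombus_prob a b K) < 0"
    using rhombus_prob_pos[OF ab assms(1)] rhombus_prob_less_one[of a b K] ab by simp
  with assms(4) have "ln 2 + H2 x + \<alpha> * ln (rhombus_prob a b K) < 0"
    by (simp add: alpha_UB_def f1_eq_rhombus_prob assms(2,3) a_def b_def neg_divide_less_eq)
  moreover have "((\<lambda>K'. ln 2 + H2 x + \<alpha> * ln (rhombus_prob a b K')) \<longlongrightarrow> ln 2 + H2 x + \<alpha> * ln (rhombus_prob a b K)) (at_right K)"
    using rhombus_prob_pos[OF ab assms(1)] by (intro tendsto_intros rhombus_prob_continuous_from_right) simp
  ultimately have "\<forall>\<^sub>F K' in at_right K. K < K' \<and> ln 2 + H2 x + \<alpha> * ln (rhombus_prob a b K') < 0"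
    by (intro eventually_conj eventually_at_right_less order_tendstoD(2))
  then show ?thesis
    using eventually_happens'[OF trivial_limit_at_right_real] by (auto simp: a_def b_def)
qed

text \<open>The rounding of \<open>N x\<close> moves the relative distance \<open>d/N\<close> away from \<open>x\<close>; this is absorbed
  by comparing with the rhombus probability at \<open>x\<close> for a slightly larger threshold \<open>K'\<close>.\<close>

lemma eventually_measure_Z2_pos_le_exp:
  assumes "0 < x" "x < 1" "0 < \<alpha>" "0 < K" "K < K'"
  defines "g \<equiv> rhombus_prob (sqrt (1 - x)) (sqrt x) K'"
  shows "\<forall>\<^sub>F N in sequentially.
    measure (disorder N (numM \<alpha> N)) {\<xi> \<in> space (disorder N (numM \<alpha> N)). 0 < Z2 N (numM \<alpha> N) x K \<xi>}
      \<le> exp (real N * (ln 2 + H2 (real (nat \<lfloor>real N * x\<rfloor>) / real N) + real (numM \<alpha> N) / real N * ln g))"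
proof -
  define t where "t = (\<lambda>N. real (nat \<lfloor>real N * x\<rfloor>) / real N)"
  have t: "t \<longlonglongrightarrow> x"
    unfolding t_def using assms by (intro tendsto_nat_floor_mult_div) simp
  have "0 < g"
    unfolding g_def using assms by (intro rhombus_prob_pos) auto
  have "\<forall>\<^sub>F N in sequentially. rhombus_prob (sqrt (1 - t N)) (sqrt (t N)) K \<le> g"
    unfolding g_def using assms by (intro eventually_rhombus_prob_le tendsto_intros t) auto
  moreover have "\<forall>\<^sub>F N in sequentially. 0 < t N" "\<forall>\<^sub>F N in sequentially. t N < 1"
    "\<forall>\<^sub>F N in sequentially. 0 < real (numM \<alpha> N) / real N"
    using order_tendstoD(1)[OF t, of 0] order_tendstoD(2)[OF t, of 1]
      order_tendstoD(1)[OF tendsto_numM_div, of \<alpha> 0] assms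
    by simp_all
  ultimately show ?thesis
  proof eventually_elim
    case (elim N)
    then have "0 < N" "0 < nat \<lfloor>real N * x\<rfloor>" "nat \<lfloor>real N * x\<rfloor> < N" "0 < numM \<alpha> N"
      by (auto simp: t_def zero_less_divide_iff divide_less_eq)
    from measure_Z2_pos_le_exp[OF this(1,4) refl this(2,3) _ \<open>0 < g\<close>] elim(1) show ?case
      by (simp add: t_def)
  qed
qed

theorem mainTheorem1:
  fixes K \<alpha> x :: real
  assumes "K > 0" and "\<alpha> > 0" and "0 < x" and "x < 1"
    and "\<alpha> > alpha_UB x K"
  shows "(\<lambda>N. measure (disorder N (numM \<alpha> N))
            {\<xi> \<in> space (disorder N (numM \<alpha> N)). Z2 N (numM \<alpha> N) x K \<xi> > 0})
         \<longlonglongrightarrow> 0"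
proof -
  obtain K' where "K < K'" and exponent_neg: "ln 2 + H2 x + \<alpha> * ln (rhombus_prob (sqrt (1 - x)) (sqrt x) K') < 0"
    using ex_larger_threshold_exponent_neg assms by blast
  define g where "g = rhombus_prob (sqrt (1 - x)) (sqrt x) K'"
  have "(\<lambda>N. ln 2 + H2 (real (nat \<lfloor>real N * x\<rfloor>) / real N) + real (numM \<alpha> N) / real N * ln g)
      \<longlonglongrightarrow> ln 2 + H2 x + \<alpha> * ln g"
    using assms by (intro tendsto_intros isCont_tendsto_compose[OF isCont_H2] tendsto_nat_floor_mult_div tendsto_numM_div) auto
  with eventually_measure_Z2_pos_le_exp[OF assms(3,4,2,1) \<open>K < K'\<close>] exponent_neg show ?thesis
    unfolding g_def by (intro tendsto_zero_if_le_exp_mult) auto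
qed

end
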